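(* Let $\mathcal{H}$ be a hypergraph on a finite vertex set $V$ and let $p\in[0,1]$. Writing $\mu=\mu_p(\mathcal{H})$, $\Delta=\Delta_p(\mathcal{H})$ and $\Lambda=\min\{\mu,\mu^2/\Delta\}$ (with $\mu^2/\Delta=\infty$ if $\Delta=0$), we have \[ \Pr\big(\nu(\mathcal{H}[V_p])\le\Lambda/1000\big)\le\exp(-\Lambda/10). \]
   Context: $V_p$ denotes the random subset of $V$ containing each element independently with probability $p$. For $W\subseteq V$, $\mathcal{H}[W]=\{A\in\mathcal{H}: A\subseteq W\}$. $\nu(\cdot)$ is the matching number. $\mu_p(\mathcal{H})=\sum_{A\in\mathcal{H}}p^{|A|}$ and $\Delta_p(\mathcal{H})=\sum p^{|A\cup B|}$, the sum over unordered pairs $\{A,B\}$ of distinct edges of $\mathcal{H}$ with $A\cap B\neq\emptyset$. *)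

theory Defs
  imports "HOL-Probability.Probability"
begin

definition random_subset :: "'a set \<Rightarrow> real \<Rightarrow> 'a set pmf" where
  "random_subset V p = map_pmf (\<lambda>b. {v \<in> V. b v}) (Pi_pmf V False (\<lambda>_. bernoulli_pmf p))"

definition induced :: "'a set set \<Rightarrow> 'a set \<Rightarrow> 'a set set" where
  "induced H W = {A \<in> H. A \<subseteq> W}"

definition matching_number :: "'a set set \<Rightarrow> nat" where
  "matching_number H = Max {card M | M. M \<subseteq> H \<and> disjoint M}"

definition mu_p :: "real \<Rightarrow> 'a set set \<Rightarrow> real" where
  "mu_p p H = (\<Sum>A\<in>H. p ^ card A)"

definition Delta_p :: "real \<Rightarrow> 'a set set \<Rightarrow> real" where
  "Delta_p p H = (\<Sum>P\<in>{{A, B} | A B. A \<in> H \<and> B \<in> H \<and> A \<noteq> B \<and> A \<inter> B \<noteq> {}}.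
                    p ^ card (\<Union>P))"

definition Lambda_p :: "real \<Rightarrow> 'a set set \<Rightarrow> real" where
  "Lambda_p p H = (if Delta_p p H = 0 then mu_p p H
                   else min (mu_p p H) ((mu_p p H)\<^sup>2 / Delta_p p H))"

end

theory Submission
  imports Defs
begin

text \<open>
  First pass to a subfamily G of H in which every edge A has overlap weight
  \<open>\<Sum>{p ^ card B | B \<in> G meets A} \<le> 4\<close> while \<open>21/25 \<mu>(G) - \<Delta>(G)/2 \<ge> 53/500 \<Lambda>\<close>
  (here \<open>\<Delta>\<close> sums over ordered pairs): sample the edges of H with probability
  \<open>q \<sim> \<mu>/\<Delta>\<close> when \<open>\<Delta>\<close> is large, then drop the heavy edges.
  If \<open>\<nu>(H[V_p]) \<le> t\<close>, a maximal matching M of \<open>G[V_p]\<close> has at most t edges, all present,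
  while every edge of G disjoint from M is absent. For fixed M, Harris' inequality separates
  these two events and Janson's inequality bounds the second by
  \<open>exp (-\<mu>(G) + \<Delta>(G)/2)\<close> times the exponentials of the overlap weights of M.
  Summing over all M with at most t edges, weighted by \<open>s ^ (card M - t)\<close> for
  \<open>s = exp (-6)\<close>, gives the claim.
\<close>

text \<open>The expectation of \<open>f(V_p)\<close>, as an explicit finite sum (see \<open>prob_random_subset\<close>).\<close>
definition subset_expectation :: "real \<Rightarrow> 'a set \<Rightarrow> ('a set \<Rightarrow> real) \<Rightarrow> real" where
  "subset_expectation p V f = (\<Sum>W\<in>Pow V. p ^ card W * (1 - p) ^ card (V - W) * f W)"

lemma subset_expectation_cong:
  "(\<And>W. W \<subseteq> V \<Longrightarrow> f W = g W) \<Longrightarrow> subset_expectation p V f = subset_expectation p V g"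
  unfolding subset_expectation_def by (intro sum.cong) auto

lemma subset_expectation_empty [simp]: "subset_expectation p {} f = f {}"
  unfolding subset_expectation_def by simp

lemma subset_expectation_insert:
  assumes "finite V" "v \<notin> V"
  shows "subset_expectation p (insert v V) f
           = p * subset_expectation p V (\<lambda>W. f (insert v W)) + (1 - p) * subset_expectation p V f"
proof -
  let ?w = "\<lambda>W. p ^ card W * (1 - p) ^ card (insert v V - W) * f W"
  have disj: "Pow V \<inter> insert v ` Pow V = {}" and inj: "inj_on (insert v) (Pow V)"
    using assms by (auto simp: inj_on_def)
  have without_v: "(\<Sum>W\<in>Pow V. ?w W) = (1 - p) * subset_expectation p V f"
    unfolding subset_expectation_def sum_distrib_left
  proof (intro sum.cong refl)
    fix W assume "W \<in> Pow V"
    then have "insert v V - W = insert v (V - W)" "v \<notin> V - W" "finite (V - W)" using assms by auto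
    then show "?w W = (1 - p) * (p ^ card W * (1 - p) ^ card (V - W) * f W)" by simp
  qed
  have with_v: "(\<Sum>W\<in>insert v ` Pow V. ?w W) = p * subset_expectation p V (\<lambda>W. f (insert v W))"
    unfolding subset_expectation_def sum_distrib_left sum.reindex[OF inj] o_def
  proof (intro sum.cong refl)
    fix W assume "W \<in> Pow V"
    then have "insert v V - insert v W = V - W" "v \<notin> W" "finite W"
      using assms by (auto dest: finite_subset)
    then show "?w (insert v W) = p * (p ^ card W * (1 - p) ^ card (V - W) * f (insert v W))" by simp
  qed
  have "subset_expectation p (insert v V) f = (\<Sum>W\<in>Pow V. ?w W) + (\<Sum>W\<in>insert v ` Pow V. ?w W)"
    unfolding subset_expectation_def Pow_insert using assms disj by (simp add: sum.union_disjoint)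
  then show ?thesis unfolding without_v with_v by simp
qed

lemma subset_expectation_const: "finite V \<Longrightarrow> subset_expectation p V (\<lambda>_. c) = c"
  by (induction V rule: finite_induct) (simp_all add: subset_expectation_insert algebra_simps)

lemma subset_expectation_cmult: "subset_expectation p V (\<lambda>W. c * f W) = c * subset_expectation p V f"
  unfolding subset_expectation_def sum_distrib_left by (simp add: mult_ac)

lemma subset_expectation_mult_const: "subset_expectation p V (\<lambda>W. f W * c) = subset_expectation p V f * c"
  unfolding subset_expectation_def sum_distrib_right by (simp add: mult_ac)

lemma subset_expectation_diff:
  "subset_expectation p V (\<lambda>W. f W - g W) = subset_expectation p V f - subset_expectation p V g"
  unfolding subset_expectation_def by (simp add: algebra_simps sum_subtractf)

lemma subset_expectation_sum:
  "subset_expectation p V (\<lambda>W. \<Sum>i\<in>I. f i W) = (\<Sum>i\<in>I. subset_expectation p V (f i))"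
  unfolding subset_expectation_def
  by (simp add: sum_distrib_left sum_distrib_right sum.swap[of _ I] algebra_simps)

lemma subset_expectation_mono:
  assumes "0 \<le> p" "p \<le> 1" "\<And>W. W \<subseteq> V \<Longrightarrow> f W \<le> g W"
  shows "subset_expectation p V f \<le> subset_expectation p V g"
  unfolding subset_expectation_def using assms by (intro sum_mono mult_left_mono) auto

lemma subset_expectation_nonneg:
  assumes "0 \<le> p" "p \<le> 1" "\<And>W. W \<subseteq> V \<Longrightarrow> 0 \<le> f W"
  shows "0 \<le> subset_expectation p V f"
  using subset_expectation_mono[of p V "\<lambda>_. 0" f] assms
  by (simp add: subset_expectation_cmult[of p V 0, simplified])

lemma subset_expectation_le_max:
  assumes "finite V" "0 \<le> p" "p \<le> 1"
  obtains W where "W \<subseteq> V" "subset_expectation p V f \<le> f W"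
proof -
  have "Max (f ` Pow V) \<in> f ` Pow V" using assms by (intro Max_in) auto
  then obtain W where W: "W \<subseteq> V" "f W = Max (f ` Pow V)" by auto
  have "subset_expectation p V f \<le> subset_expectation p V (\<lambda>_. f W)"
    using assms W by (intro subset_expectation_mono) (auto intro!: Max_ge)
  then show ?thesis using that W assms by (simp add: subset_expectation_const)
qed

lemma pmf_random_subset:
  assumes "finite V" "0 \<le> p" "p \<le> 1" "W \<subseteq> V"
  shows "pmf (random_subset V p) W = p ^ card W * (1 - p) ^ card (V - W)"
proof -
  define Q where "Q = Pi_pmf V False (\<lambda>_. bernoulli_pmf p)"
  have "(\<lambda>b. {v \<in> V. b v}) -` {W} \<inter> set_pmf Q = {(\<lambda>v. v \<in> W)} \<inter> set_pmf Q"
    using set_Pi_pmf_subset[OF assms(1), of False "\<lambda>_. bernoulli_pmf p"] assms(4)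
    unfolding Q_def by (auto 0 3 simp: fun_eq_iff)
  then have "pmf (random_subset V p) W = measure Q {(\<lambda>v. v \<in> W)}"
    unfolding random_subset_def Q_def[symmetric] pmf_map by (metis measure_Int_set_pmf)
  also have "\<dots> = (\<Prod>v\<in>V. if v \<in> W then p else 1 - p)"
    unfolding measure_pmf_single Q_def using assms by (subst pmf_Pi) (auto intro!: prod.cong)
  also have "\<dots> = p ^ card W * (1 - p) ^ card (V - W)"
    using assms by (simp add: prod.If_cases Int_absorb1 Diff_eq Int_commute)
  finally show ?thesis .
qed

lemma prob_random_subset:
  assumes "finite V" "0 \<le> p" "p \<le> 1"
  shows "measure_pmf.prob (random_subset V p) E = subset_expectation p V (\<lambda>W. of_bool (W \<in> E))"
proof -
  have "set_pmf (random_subset V p) \<subseteq> Pow V" unfolding random_subset_def by auto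
  then have "measure_pmf.prob (random_subset V p) E = measure_pmf.prob (random_subset V p) (E \<inter> Pow V)"
    by (metis (no_types, lifting) inf.absorb_iff2 inf_assoc inf_commute measure_Int_set_pmf)
  also have "\<dots> = (\<Sum>W\<in>E \<inter> Pow V. p ^ card W * (1 - p) ^ card (V - W))"
    using assms by (subst measure_measure_pmf_finite) (auto intro!: sum.cong simp: pmf_random_subset)
  also have "\<dots> = subset_expectation p V (\<lambda>W. of_bool (W \<in> E))"
    unfolding subset_expectation_def using assms by (simp add: Int_commute)
  finally show ?thesis .
qed

lemma harris_inequality:
  assumes "finite V" "0 \<le> p" "p \<le> 1" "mono_on (Pow V) f" "mono_on (Pow V) g"
  shows "subset_expectation p V f * subset_expectation p V g \<le> subset_expectation p V (\<lambda>W. f W * g W)"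
  using assms(1,4,5)
proof (induction V arbitrary: f g rule: finite_induct)
  case empty
  then show ?case by simp
next
  case (insert v V)
  let ?E = "subset_expectation p V"
  let ?f1 = "\<lambda>W. f (insert v W)" and ?g1 = "\<lambda>W. g (insert v W)"
  have mono_insert: "mono_on (Pow V) (\<lambda>W. h (insert v W))" "mono_on (Pow V) h"
    and le_insert: "?E h \<le> ?E (\<lambda>W. h (insert v W))"
    if "mono_on (Pow (insert v V)) h" for h
  proof -
    show "mono_on (Pow V) (\<lambda>W. h (insert v W))"
    proof (rule mono_onI)
      fix X Y assume "X \<in> Pow V" "Y \<in> Pow V" "X \<le> Y"
      then show "h (insert v X) \<le> h (insert v Y)" by (intro mono_onD[OF that]) auto
    qed
    show "mono_on (Pow V) h" using that by (rule mono_on_subset) auto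
    show "?E h \<le> ?E (\<lambda>W. h (insert v W))"
      using assms by (intro subset_expectation_mono mono_onD[OF that]) auto
  qed
  have "subset_expectation p (insert v V) f * subset_expectation p (insert v V) g
      = (p * ?E ?f1 + (1 - p) * ?E f) * (p * ?E ?g1 + (1 - p) * ?E g)"
    using insert.hyps by (simp add: subset_expectation_insert)
  also have "\<dots> = p * (?E ?f1 * ?E ?g1) + (1 - p) * (?E f * ?E g)
       - p * (1 - p) * ((?E ?f1 - ?E f) * (?E ?g1 - ?E g))"
    by (simp add: algebra_simps)
  also have "\<dots> \<le> p * (?E ?f1 * ?E ?g1) + (1 - p) * (?E f * ?E g)"
    using le_insert[OF insert.prems(1)] le_insert[OF insert.prems(2)] assms by simp
  also have "\<dots> \<le> p * ?E (\<lambda>W. ?f1 W * ?g1 W) + (1 - p) * ?E (\<lambda>W. f W * g W)"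
    using insert.IH mono_insert[OF insert.prems(1)] mono_insert[OF insert.prems(2)] assms
    by (intro add_mono mult_left_mono) auto
  also have "\<dots> = subset_expectation p (insert v V) (\<lambda>W. f W * g W)"
    using insert.hyps by (simp add: subset_expectation_insert)
  finally show ?case .
qed

lemma harris_inequality_antimono:
  assumes "finite V" "0 \<le> p" "p \<le> 1" "mono_on (Pow V) f" "antimono_on (Pow V) g"
  shows "subset_expectation p V (\<lambda>W. f W * g W) \<le> subset_expectation p V f * subset_expectation p V g"
proof -
  have "mono_on (Pow V) (\<lambda>W. - g W)"
  proof (rule mono_onI)
    fix X Y assume "X \<in> Pow V" "Y \<in> Pow V" "X \<le> Y"
    then show "- g X \<le> - g Y" using monotone_onD[OF assms(5)] by simp
  qed
  from harris_inequality[OF assms(1-4) this]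
  have "subset_expectation p V f * subset_expectation p V (\<lambda>W. - 1 * g W)
      \<le> subset_expectation p V (\<lambda>W. - 1 * (f W * g W))"
    by simp
  then show ?thesis unfolding subset_expectation_cmult by simp
qed

lemma subset_expectation_present_mult:
  assumes "finite V" "A \<subseteq> V" "\<And>W. g W = g (W - A)"
  shows "subset_expectation p V (\<lambda>W. of_bool (A \<subseteq> W) * g W) = p ^ card A * subset_expectation p V g"
proof -
  have "finite A" using assms finite_subset by blast
  then show ?thesis using assms
  proof (induction A arbitrary: V rule: finite_induct)
    case empty
    then show ?case by simp
  next
    case (insert a A)
    define V' where "V' = V - {a}"
    have V: "V = insert a V'" "a \<notin> V'" "finite V'" "A \<subseteq> V'"
      using insert V'_def by auto
    have g_insert: "g (insert a W) = g W" for W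
    proof -
      have "insert a W - insert a A = W - insert a A" by auto
      then show ?thesis using insert.prems(3)[of "insert a W"] insert.prems(3)[of W] by simp
    qed
    have g_A: "g W = g (W - A)" for W
    proof -
      have "W - A - insert a A = W - insert a A" by auto
      then show ?thesis using insert.prems(3)[of "W - A"] insert.prems(3)[of W] by simp
    qed
    have absent: "subset_expectation p V' (\<lambda>W. of_bool (insert a A \<subseteq> W) * g W) = 0"
      using V by (subst subset_expectation_cong[of V' _ "\<lambda>_. 0"]) (auto simp: subset_expectation_const)
    have present: "subset_expectation p V' (\<lambda>W. of_bool (insert a A \<subseteq> insert a W) * g (insert a W))
        = p ^ card A * subset_expectation p V' g"
      unfolding insert.IH[OF V(3,4) g_A, symmetric]
      using insert.hyps by (intro subset_expectation_cong) (simp add: g_insert subset_insert)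
    have "subset_expectation p V (\<lambda>W. of_bool (insert a A \<subseteq> W) * g W)
        = p * subset_expectation p V' (\<lambda>W. of_bool (insert a A \<subseteq> insert a W) * g (insert a W))
          + (1 - p) * subset_expectation p V' (\<lambda>W. of_bool (insert a A \<subseteq> W) * g W)"
      using V(3,2) unfolding V(1) by (rule subset_expectation_insert)
    also have "\<dots> = p ^ card (insert a A) * subset_expectation p V' g"
      using insert.hyps unfolding absent present by simp
    also have "subset_expectation p V' g = subset_expectation p V g"
      using V by (simp add: subset_expectation_insert g_insert algebra_simps)
    finally show ?case .
  qed
qed

lemma subset_expectation_present:
  "finite V \<Longrightarrow> A \<subseteq> V \<Longrightarrow> subset_expectation p V (\<lambda>W. of_bool (A \<subseteq> W)) = p ^ card A"
  using subset_expectation_present_mult[of V A "\<lambda>_. 1" p] by (simp add: subset_expectation_const)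

definition Delta_ordered :: "real \<Rightarrow> 'a set set \<Rightarrow> real" where
  "Delta_ordered p S = (\<Sum>A\<in>S. \<Sum>B\<in>S. of_bool (A \<noteq> B \<and> A \<inter> B \<noteq> {}) * p ^ card (A \<union> B))"

lemma Delta_ordered_nonneg: "0 \<le> p \<Longrightarrow> 0 \<le> Delta_ordered p S"
  unfolding Delta_ordered_def by (intro sum_nonneg) auto

lemma Delta_ordered_mono:
  assumes "S \<subseteq> G" "finite G" "0 \<le> p"
  shows "Delta_ordered p S \<le> Delta_ordered p G"
proof -
  have "Delta_ordered p S \<le> (\<Sum>A\<in>S. \<Sum>B\<in>G. of_bool (A \<noteq> B \<and> A \<inter> B \<noteq> {}) * p ^ card (A \<union> B))"
    unfolding Delta_ordered_def using assms
    by (intro sum_mono sum_mono2) (auto dest: finite_subset)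
  also have "\<dots> \<le> Delta_ordered p G"
    unfolding Delta_ordered_def using assms by (intro sum_mono2 sum_nonneg) auto
  finally show ?thesis .
qed

lemma Delta_ordered_insert:
  assumes "finite S" "A \<notin> S"
  shows "Delta_ordered p (insert A S)
           = Delta_ordered p S + 2 * (\<Sum>B\<in>{B\<in>S. A \<inter> B \<noteq> {}}. p ^ card (A \<union> B))"
proof -
  have row: "(\<Sum>B\<in>S. of_bool (A \<noteq> B \<and> A \<inter> B \<noteq> {}) * p ^ card (A \<union> B))
      = (\<Sum>B\<in>{B\<in>S. A \<inter> B \<noteq> {}}. p ^ card (A \<union> B))"
    using assms by (intro sum.mono_neutral_cong_right) auto
  have column: "(\<Sum>B\<in>S. of_bool (B \<noteq> A \<and> B \<inter> A \<noteq> {}) * p ^ card (B \<union> A))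
      = (\<Sum>B\<in>S. of_bool (A \<noteq> B \<and> A \<inter> B \<noteq> {}) * p ^ card (A \<union> B))"
    by (intro sum.cong) (auto simp: Un_commute Int_commute)
  show ?thesis
    using assms unfolding Delta_ordered_def
    by (simp add: sum.distrib column row del: sum_of_bool_mult_eq)
qed

lemma of_bool_avoid_union_bound:
  assumes "finite S1"
  shows "of_bool (A \<subseteq> W \<and> (\<forall>B\<in>S2. \<not> B \<subseteq> W)) - (\<Sum>B\<in>S1. of_bool (A \<union> B \<subseteq> W \<and> (\<forall>B\<in>S2. \<not> B \<subseteq> W)))
           \<le> (of_bool (A \<subseteq> W \<and> (\<forall>B\<in>S1 \<union> S2. \<not> B \<subseteq> W)) :: real)"
proof (cases "\<exists>B\<in>S1. A \<union> B \<subseteq> W \<and> (\<forall>B\<in>S2. \<not> B \<subseteq> W)")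
  case True
  then obtain B where "B \<in> S1" "A \<union> B \<subseteq> W \<and> (\<forall>B\<in>S2. \<not> B \<subseteq> W)" by blast
  then have "1 \<le> (\<Sum>B\<in>S1. of_bool (A \<union> B \<subseteq> W \<and> (\<forall>B\<in>S2. \<not> B \<subseteq> W)) :: real)"
    using assms by (intro order.trans[OF _ member_le_sum[OF \<open>B \<in> S1\<close>]]) auto
  moreover have "of_bool (A \<subseteq> W \<and> (\<forall>B\<in>S2. \<not> B \<subseteq> W)) \<le> (1 :: real)"
    "0 \<le> (of_bool (A \<subseteq> W \<and> (\<forall>B\<in>S1 \<union> S2. \<not> B \<subseteq> W)) :: real)" by simp_all
  ultimately show ?thesis by linarith
next
  case False
  then show ?thesis by (auto intro: sum_nonneg)
qed

lemma janson_step: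
  assumes "finite V" "0 \<le> p" "p \<le> 1" "finite S" "A \<subseteq> V" "\<And>B. B \<in> S \<Longrightarrow> B \<subseteq> V"
  defines "D \<equiv> \<lambda>W. of_bool (\<forall>B\<in>S. \<not> B \<subseteq> W)"
  shows "(p ^ card A - (\<Sum>B\<in>{B\<in>S. A \<inter> B \<noteq> {}}. p ^ card (A \<union> B))) * subset_expectation p V D
           \<le> subset_expectation p V (\<lambda>W. of_bool (A \<subseteq> W) * D W)"
proof -
  let ?E = "subset_expectation p V"
  define S1 where "S1 = {B\<in>S. A \<inter> B \<noteq> {}}"
  define Dfar where "Dfar = (\<lambda>W. of_bool (\<forall>B\<in>S - S1. \<not> B \<subseteq> W) :: real)"
  define c where "c = p ^ card A - (\<Sum>B\<in>S1. p ^ card (A \<union> B))"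
  have "finite S1" "S1 \<union> (S - S1) = S" using assms(4) unfolding S1_def by auto
  have pointwise: "of_bool (A \<subseteq> W) * Dfar W - (\<Sum>B\<in>S1. of_bool (A \<union> B \<subseteq> W) * Dfar W)
                     \<le> of_bool (A \<subseteq> W) * D W" for W
    using of_bool_avoid_union_bound[OF \<open>finite S1\<close>, of A W "S - S1"] \<open>S1 \<union> (S - S1) = S\<close>
    unfolding D_def Dfar_def of_bool_conj by simp
  have Dfar_ignores_A: "Dfar W = Dfar (W - A)" for W
    unfolding Dfar_def S1_def by (rule arg_cong[where f = of_bool]) blast
  have Dfar_antimono: "antimono_on (Pow V) Dfar"
    unfolding Dfar_def by (intro monotone_onI) (auto dest: subset_trans)
  have pair_bound: "?E (\<lambda>W. of_bool (A \<union> B \<subseteq> W) * Dfar W) \<le> p ^ card (A \<union> B) * ?E Dfar"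
    if "B \<in> S1" for B
  proof -
    have "A \<union> B \<subseteq> V" using that assms unfolding S1_def by auto
    moreover have "mono_on (Pow V) (\<lambda>W. of_bool (A \<union> B \<subseteq> W) :: real)" by (intro mono_onI) auto
    ultimately show ?thesis
      using harris_inequality_antimono[OF assms(1-3) _ Dfar_antimono] subset_expectation_present[OF assms(1)]
      by metis
  qed
  have "(\<Sum>B\<in>S1. ?E (\<lambda>W. of_bool (A \<union> B \<subseteq> W) * Dfar W)) \<le> (\<Sum>B\<in>S1. p ^ card (A \<union> B) * ?E Dfar)"
    by (intro sum_mono pair_bound)
  moreover have "?E (\<lambda>W. of_bool (A \<subseteq> W) * Dfar W - (\<Sum>B\<in>S1. of_bool (A \<union> B \<subseteq> W) * Dfar W))
      \<le> ?E (\<lambda>W. of_bool (A \<subseteq> W) * D W)"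
    using pointwise assms by (intro subset_expectation_mono) auto
  ultimately have lower: "c * ?E Dfar \<le> ?E (\<lambda>W. of_bool (A \<subseteq> W) * D W)"
    unfolding subset_expectation_diff subset_expectation_sum c_def left_diff_distrib sum_distrib_right
      subset_expectation_present_mult[of V A Dfar, OF assms(1,5) Dfar_ignores_A]
    by linarith
  have "?E D \<le> ?E Dfar" using assms by (intro subset_expectation_mono) (auto simp: D_def Dfar_def)
  moreover have "0 \<le> ?E D" "0 \<le> ?E (\<lambda>W. of_bool (A \<subseteq> W) * D W)"
    using assms by (auto intro!: subset_expectation_nonneg simp: D_def)
  ultimately show ?thesis
    using lower unfolding c_def[symmetric] S1_def[symmetric]
    by (smt (verit) mult_left_mono mult_nonpos_nonneg)
qed

theorem janson_inequality:
  assumes "finite V" "0 \<le> p" "p \<le> 1" "finite S" "\<And>A. A \<in> S \<Longrightarrow> A \<subseteq> V"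
  shows "subset_expectation p V (\<lambda>W. of_bool (\<forall>A\<in>S. \<not> A \<subseteq> W))
           \<le> exp (- mu_p p S + Delta_ordered p S / 2)"
  using assms(4,5)
proof (induction S rule: finite_induct)
  case empty
  then show ?case using assms by (simp add: subset_expectation_const Delta_ordered_def mu_p_def)
next
  case (insert A S)
  let ?E = "subset_expectation p V"
  define D where "D = (\<lambda>W. of_bool (\<forall>B\<in>S. \<not> B \<subseteq> W) :: real)"
  define c where "c = p ^ card A - (\<Sum>B\<in>{B\<in>S. A \<inter> B \<noteq> {}}. p ^ card (A \<union> B))"
  have "?E (\<lambda>W. of_bool (\<forall>B\<in>insert A S. \<not> B \<subseteq> W)) = ?E D - ?E (\<lambda>W. of_bool (A \<subseteq> W) * D W)"
    unfolding subset_expectation_diff[symmetric] by (intro subset_expectation_cong) (auto simp: D_def)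
  also have "\<dots> \<le> (1 - c) * ?E D"
    using janson_step[OF assms(1-3) insert.hyps(1)] insert.prems unfolding c_def D_def
    by (simp add: algebra_simps)
  also have "\<dots> \<le> exp (- c) * ?E D"
    using assms exp_ge_add_one_self[of "- c"]
    by (intro mult_right_mono subset_expectation_nonneg) (auto simp: D_def)
  also have "\<dots> \<le> exp (- c) * exp (- mu_p p S + Delta_ordered p S / 2)"
    using insert by (intro mult_left_mono) (auto simp: D_def)
  also have "\<dots> = exp (- mu_p p (insert A S) + Delta_ordered p (insert A S) / 2)"
    using insert.hyps
    by (simp add: Delta_ordered_insert mu_p_def c_def exp_add[symmetric] algebra_simps)
  finally show ?case .
qed

definition overlap_weight :: "real \<Rightarrow> 'a set set \<Rightarrow> 'a set \<Rightarrow> real" where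
  "overlap_weight p G A = (\<Sum>B\<in>{B\<in>G. A \<inter> B \<noteq> {}}. p ^ card B)"

lemma card_le_matching_number:
  assumes "finite H" "M \<subseteq> H" "disjoint M"
  shows "card M \<le> matching_number H"
proof -
  have "{card M |M. M \<subseteq> H \<and> disjoint M} \<subseteq> card ` Pow H" by auto
  then have "finite {card M |M. M \<subseteq> H \<and> disjoint M}" using assms(1) finite_subset by blast
  then show ?thesis unfolding matching_number_def using assms by (intro Max_ge) auto
qed

lemma small_maximal_matching:
  assumes "finite H" "\<And>A. A \<in> H \<Longrightarrow> A \<noteq> {}" "G \<subseteq> H"
    and "real (matching_number (induced H W)) \<le> t"
  obtains M where "M \<subseteq> G" "disjoint M" "real (card M) \<le> t" "\<Union>M \<subseteq> W"
    "\<And>B. B \<in> G \<Longrightarrow> \<forall>A\<in>M. A \<inter> B = {} \<Longrightarrow> \<not> B \<subseteq> W"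
proof -
  define P where "P = induced G W"
  have "finite G" using assms(1,3) by (rule finite_subset[rotated])
  then have "finite P" "P \<subseteq> induced H W"
    using assms(3) unfolding P_def induced_def by auto
  have "\<exists>M. (M \<subseteq> P \<and> disjoint M) \<and> (\<forall>M'. M' \<subseteq> P \<and> disjoint M' \<longrightarrow> card M' \<le> card M)"
  proof (rule ex_has_greatest_nat[where k = "{}" and b = "card P + 1"])
    show "\<forall>M. M \<subseteq> P \<and> disjoint M \<longrightarrow> card M < card P + 1"
      using \<open>finite P\<close> by (auto dest: card_mono)
  qed auto
  then obtain M where M: "M \<subseteq> P" "disjoint M"
    and maximal: "\<And>M'. M' \<subseteq> P \<Longrightarrow> disjoint M' \<Longrightarrow> card M' \<le> card M" by blast
  have "card M \<le> matching_number (induced H W)"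
    using card_le_matching_number[OF _ _ M(2)] M(1) \<open>P \<subseteq> induced H W\<close> assms(1)
    unfolding induced_def by auto
  moreover have "\<not> B \<subseteq> W" if B: "B \<in> G" "\<forall>A\<in>M. A \<inter> B = {}" for B
  proof
    assume "B \<subseteq> W"
    then have "insert B M \<subseteq> P" "disjoint (insert B M)"
      using M B unfolding P_def induced_def disjoint_def pairwise_insert disjnt_def
      by (auto simp: Int_commute)
    moreover have "B \<notin> M" using B assms(2,3) by blast
    moreover have "finite M" using M(1) \<open>finite P\<close> finite_subset by blast
    ultimately show False using maximal[of "insert B M"] by simp
  qed
  moreover have "M \<subseteq> G" "\<Union>M \<subseteq> W" using M(1) unfolding P_def induced_def by auto
  ultimately show ?thesis using that M(2) assms(4) by simp
qed

lemma mu_p_le_disjoint_part: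
  assumes "finite G" "M \<subseteq> G" "0 \<le> p"
  shows "mu_p p G \<le> mu_p p {B\<in>G. \<forall>A\<in>M. A \<inter> B = {}} + (\<Sum>A\<in>M. overlap_weight p G A)"
proof -
  define S where "S = {B\<in>G. \<forall>A\<in>M. A \<inter> B = {}}"
  have "finite M" using assms finite_subset by blast
  have "mu_p p G = mu_p p S + (\<Sum>B\<in>G - S. p ^ card B)"
    unfolding mu_p_def using assms by (subst sum.subset_diff[of S G]) (auto simp: S_def)
  also have "(\<Sum>B\<in>G - S. p ^ card B) \<le> (\<Sum>B\<in>G - S. \<Sum>A\<in>M. of_bool (A \<inter> B \<noteq> {}) * p ^ card B)"
  proof (intro sum_mono)
    fix B assume "B \<in> G - S"
    then obtain A where A: "A \<in> M" "A \<inter> B \<noteq> {}" unfolding S_def by blast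
    then show "p ^ card B \<le> (\<Sum>A\<in>M. of_bool (A \<inter> B \<noteq> {}) * p ^ card B)"
      using member_le_sum[OF A(1), of "\<lambda>A. of_bool (A \<inter> B \<noteq> {}) * p ^ card B"] assms \<open>finite M\<close>
      by simp
  qed
  also have "\<dots> \<le> (\<Sum>B\<in>G. \<Sum>A\<in>M. of_bool (A \<inter> B \<noteq> {}) * p ^ card B)"
    using assms by (intro sum_mono2 sum_nonneg) auto
  also have "\<dots> = (\<Sum>A\<in>M. overlap_weight p G A)"
    unfolding overlap_weight_def using assms(1) by (subst sum.swap) (simp add: Collect_conj_eq Int_commute)
  finally show ?thesis unfolding S_def by simp
qed

text \<open>Rankin's trick: weight each small subset by \<open>s ^ (card M - t) \<ge> 1\<close>.\<close>
lemma sum_prod_small_subsets_le: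
  fixes x :: "'b \<Rightarrow> real"
  assumes "finite G" "\<And>A. A \<in> G \<Longrightarrow> 0 \<le> x A" "0 < s" "s \<le> 1" "0 \<le> t"
  shows "(\<Sum>M\<in>{M. M \<subseteq> G \<and> real (card M) \<le> t}. \<Prod>A\<in>M. x A) \<le> s powr (- t) * exp (s * (\<Sum>A\<in>G. x A))"
proof -
  have "(\<Sum>M\<in>{M. M \<subseteq> G \<and> real (card M) \<le> t}. \<Prod>A\<in>M. x A)
      \<le> (\<Sum>M\<in>{M. M \<subseteq> G \<and> real (card M) \<le> t}. s powr (real (card M) - t) * (\<Prod>A\<in>M. x A))"
  proof (intro sum_mono)
    fix M assume M: "M \<in> {M. M \<subseteq> G \<and> real (card M) \<le> t}"
    then have "real (card M) - t \<le> 0" by simp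
    then have "1 \<le> s powr (real (card M) - t)"
      using assms by (metis powr_mono2' powr_one_eq_one)
    moreover have "0 \<le> (\<Prod>A\<in>M. x A)" using M assms by (intro prod_nonneg) auto
    ultimately show "(\<Prod>A\<in>M. x A) \<le> s powr (real (card M) - t) * (\<Prod>A\<in>M. x A)"
      using mult_right_mono by fastforce
  qed
  also have "\<dots> \<le> (\<Sum>M\<in>Pow G. s powr (real (card M) - t) * (\<Prod>A\<in>M. x A))"
    using assms by (intro sum_mono2) (auto intro!: mult_nonneg_nonneg prod_nonneg)
  also have "\<dots> = s powr (- t) * (\<Sum>M\<in>Pow G. (\<Prod>A\<in>M. s * x A) * (\<Prod>A\<in>G - M. 1))"
    unfolding sum_distrib_left
  proof (intro sum.cong refl)
    fix M assume "M \<in> Pow G"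
    have "s powr (real (card M) - t) = s powr (- t) * s ^ card M"
      using assms by (simp add: powr_diff powr_realpow powr_minus divide_inverse)
    then show "s powr (real (card M) - t) * (\<Prod>A\<in>M. x A)
        = s powr (- t) * ((\<Prod>A\<in>M. s * x A) * (\<Prod>A\<in>G - M. 1))"
      by (simp add: prod.distrib)
  qed
  also have "\<dots> = s powr (- t) * (\<Prod>A\<in>G. s * x A + 1)"
    using prod_add[OF assms(1), of "\<lambda>A. s * x A" "\<lambda>_. 1"] by simp
  also have "\<dots> \<le> s powr (- t) * (\<Prod>A\<in>G. exp (s * x A))"
    using assms by (intro mult_left_mono prod_mono) (auto simp: add.commute)
  also have "\<dots> = s powr (- t) * exp (s * (\<Sum>A\<in>G. x A))"
    using assms by (simp add: exp_sum sum_distrib_left)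
  finally show ?thesis .
qed

text \<open>Harris splits the event; Janson bounds the absence of the edges disjoint from M, whose
  \<open>mu_p\<close> falls short of that of G by at most the overlap weights of M.\<close>
lemma matching_witness_bound:
  assumes "finite V" "0 \<le> p" "p \<le> 1" "finite G" "\<And>A. A \<in> G \<Longrightarrow> A \<subseteq> V"
    and "M \<subseteq> G" "disjoint M"
  shows "subset_expectation p V (\<lambda>W. of_bool (\<Union>M \<subseteq> W) * of_bool (\<forall>B\<in>{B\<in>G. \<forall>A\<in>M. A \<inter> B = {}}. \<not> B \<subseteq> W))
           \<le> exp (- mu_p p G + Delta_ordered p G / 2) * (\<Prod>A\<in>M. p ^ card A * exp (overlap_weight p G A))"
proof -
  define S where "S = {B\<in>G. \<forall>A\<in>M. A \<inter> B = {}}"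
  have "S \<subseteq> G" unfolding S_def by blast
  then have "finite S" using assms(4) by (rule finite_subset)
  have "finite M" using assms(6,4) by (rule finite_subset)
  have "\<Union>M \<subseteq> V" using assms(5,6) by blast
  have finite_edges: "finite A" if "A \<in> M" for A
    using that \<open>\<Union>M \<subseteq> V\<close> by (intro finite_subset[OF _ assms(1)]) blast
  have "mono_on (Pow V) (\<lambda>W. of_bool (\<Union>M \<subseteq> W) :: real)"
    by (intro mono_onI) auto
  moreover have "antimono_on (Pow V) (\<lambda>W. of_bool (\<forall>B\<in>S. \<not> B \<subseteq> W) :: real)"
    by (intro monotone_onI) (auto dest: subset_trans)
  ultimately have "subset_expectation p V (\<lambda>W. of_bool (\<Union>M \<subseteq> W) * of_bool (\<forall>B\<in>S. \<not> B \<subseteq> W))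
      \<le> subset_expectation p V (\<lambda>W. of_bool (\<Union>M \<subseteq> W)) * subset_expectation p V (\<lambda>W. of_bool (\<forall>B\<in>S. \<not> B \<subseteq> W))"
    by (rule harris_inequality_antimono[OF assms(1-3)])
  also have "subset_expectation p V (\<lambda>W. of_bool (\<Union>M \<subseteq> W)) = (\<Prod>A\<in>M. p ^ card A)"
  proof -
    have "card (\<Union>M) = (\<Sum>A\<in>M. card A)"
      using assms(7) finite_edges by (rule card_Union_disjoint)
    then show ?thesis
      using subset_expectation_present[OF assms(1) \<open>\<Union>M \<subseteq> V\<close>] by (simp add: power_sum)
  qed
  also have "subset_expectation p V (\<lambda>W. of_bool (\<forall>B\<in>S. \<not> B \<subseteq> W)) \<le> exp (- mu_p p S + Delta_ordered p S / 2)"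
    using assms \<open>finite S\<close> \<open>S \<subseteq> G\<close> by (intro janson_inequality) auto
  also have "\<dots> \<le> exp (- mu_p p G + Delta_ordered p G / 2 + (\<Sum>A\<in>M. overlap_weight p G A))"
    using mu_p_le_disjoint_part[OF assms(4,6,2)] Delta_ordered_mono[OF \<open>S \<subseteq> G\<close> assms(4,2)]
    unfolding S_def by simp
  also have "\<dots> = exp (- mu_p p G + Delta_ordered p G / 2) * (\<Prod>A\<in>M. exp (overlap_weight p G A))"
    using \<open>finite M\<close> by (simp add: exp_add exp_sum)
  finally have "subset_expectation p V (\<lambda>W. of_bool (\<Union>M \<subseteq> W) * of_bool (\<forall>B\<in>S. \<not> B \<subseteq> W))
      \<le> (\<Prod>A\<in>M. p ^ card A) * (exp (- mu_p p G + Delta_ordered p G / 2) * (\<Prod>A\<in>M. exp (overlap_weight p G A)))"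
    using assms(2) by (simp add: mult_left_mono prod_nonneg)
  then show ?thesis unfolding S_def by (simp add: prod.distrib mult_ac)
qed

text \<open>Union bound over the possible maximal matchings of \<open>G[W]\<close> with at most t edges.\<close>
lemma small_matching_bound:
  assumes "finite V" "0 \<le> p" "p \<le> 1" "finite H" "\<And>A. A \<in> H \<Longrightarrow> A \<subseteq> V \<and> A \<noteq> {}"
    and "G \<subseteq> H" "\<And>A. A \<in> G \<Longrightarrow> overlap_weight p G A \<le> \<kappa>"
    and "0 < s" "s \<le> 1" "0 \<le> t"
  shows "subset_expectation p V (\<lambda>W. of_bool (real (matching_number (induced H W)) \<le> t))
     \<le> exp (- mu_p p G + Delta_ordered p G / 2) * (s powr (- t) * exp (s * (exp \<kappa> * mu_p p G)))"
proof -
  define F where "F = (\<lambda>M W. of_bool (\<Union>M \<subseteq> W) * of_bool (\<forall>B\<in>{B\<in>G. \<forall>A\<in>M. A \<inter> B = {}}. \<not> B \<subseteq> W) :: real)"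
  define Mat where "Mat = {M. M \<subseteq> G \<and> disjoint M \<and> real (card M) \<le> t}"
  define x where "x = (\<lambda>A. p ^ card A * exp (overlap_weight p G A))"
  have "finite G" using assms(4,6) by (rule finite_subset[rotated])
  moreover have "Mat \<subseteq> Pow G" unfolding Mat_def by blast
  ultimately have "finite Mat" by (simp add: finite_subset)
  have covered: "of_bool (real (matching_number (induced H W)) \<le> t) \<le> (\<Sum>M\<in>Mat. F M W)" for W
  proof (cases "real (matching_number (induced H W)) \<le> t")
    case True
    obtain M where "M \<subseteq> G" "disjoint M" "real (card M) \<le> t" "\<Union>M \<subseteq> W"
      and absent: "\<And>B. B \<in> G \<Longrightarrow> \<forall>A\<in>M. A \<inter> B = {} \<Longrightarrow> \<not> B \<subseteq> W"
      using small_maximal_matching[OF assms(4) _ assms(6) True] assms(5) by blast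
    then have "M \<in> Mat" "F M W = 1" unfolding Mat_def F_def by auto
    then show ?thesis
      using True member_le_sum[of M Mat "\<lambda>M. F M W"] \<open>finite Mat\<close> by (simp add: F_def)
  qed (simp add: F_def sum_nonneg)
  have "subset_expectation p V (\<lambda>W. of_bool (real (matching_number (induced H W)) \<le> t))
      \<le> (\<Sum>M\<in>Mat. subset_expectation p V (F M))"
    unfolding subset_expectation_sum[symmetric] using covered assms by (intro subset_expectation_mono) auto
  also have "\<dots> \<le> (\<Sum>M\<in>Mat. exp (- mu_p p G + Delta_ordered p G / 2) * (\<Prod>A\<in>M. x A))"
    unfolding F_def x_def using assms \<open>finite G\<close>
    by (intro sum_mono matching_witness_bound) (auto simp: Mat_def)
  also have "\<dots> \<le> exp (- mu_p p G + Delta_ordered p G / 2) * (\<Sum>M\<in>{M. M \<subseteq> G \<and> real (card M) \<le> t}. \<Prod>A\<in>M. x A)"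
    unfolding sum_distrib_left[symmetric] using \<open>finite G\<close> assms(2)
    by (intro mult_left_mono sum_mono2) (auto simp: Mat_def x_def intro!: prod_nonneg)
  also have "\<dots> \<le> exp (- mu_p p G + Delta_ordered p G / 2) * (s powr (- t) * exp (s * (\<Sum>A\<in>G. x A)))"
    using assms \<open>finite G\<close> by (intro mult_left_mono sum_prod_small_subsets_le) (auto simp: x_def)
  also have "(\<Sum>A\<in>G. x A) \<le> exp \<kappa> * mu_p p G"
    unfolding mu_p_def sum_distrib_left x_def using assms
    by (intro sum_mono) (auto simp: mult.commute[of "exp \<kappa>"] intro!: mult_left_mono)
  finally show ?thesis using assms by (simp add: mult_left_mono)
qed

lemma Delta_ordered_eq_Delta_p:
  assumes "finite H"
  shows "Delta_ordered p H = 2 * Delta_p p H"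
proof -
  define Od where "Od = {x \<in> H \<times> H. fst x \<noteq> snd x \<and> fst x \<inter> snd x \<noteq> {}}"
  define pair where "pair = (\<lambda>x::'a set \<times> 'a set. {fst x, snd x})"
  define f where "f = (\<lambda>P::'a set set. p ^ card (\<Union>P))"
  have pairs: "pair ` Od = {{A, B} | A B. A \<in> H \<and> B \<in> H \<and> A \<noteq> B \<and> A \<inter> B \<noteq> {}}"
  proof (intro equalityI subsetI)
    fix P assume "P \<in> pair ` Od"
    then obtain A B where "(A, B) \<in> Od" "P = {A, B}" unfolding pair_def by auto
    then show "P \<in> {{A, B} | A B. A \<in> H \<and> B \<in> H \<and> A \<noteq> B \<and> A \<inter> B \<noteq> {}}"
      unfolding Od_def by auto
  next
    fix P assume "P \<in> {{A, B} | A B. A \<in> H \<and> B \<in> H \<and> A \<noteq> B \<and> A \<inter> B \<noteq> {}}"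
    then obtain A B where "P = {A, B}" "A \<in> H" "B \<in> H" "A \<noteq> B" "A \<inter> B \<noteq> {}" by blast
    then have "(A, B) \<in> Od" "P = pair (A, B)" unfolding Od_def pair_def by auto
    then show "P \<in> pair ` Od" by blast
  qed
  have fibre: "(\<Sum>x\<in>{x \<in> Od. pair x = P}. f (pair x)) = 2 * f P" if P: "P \<in> pair ` Od" for P
  proof -
    obtain A B where AB: "(A, B) \<in> Od" "P = {A, B}" using P unfolding pair_def by auto
    then have "{x \<in> Od. pair x = P} = {(A, B), (B, A)}" "A \<noteq> B"
      unfolding Od_def pair_def by (auto simp: doubleton_eq_iff Int_commute)
    then show ?thesis using AB by (simp add: pair_def insert_commute)
  qed
  have "Delta_ordered p H = (\<Sum>x\<in>H \<times> H. of_bool (fst x \<noteq> snd x \<and> fst x \<inter> snd x \<noteq> {}) * f (pair x))"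
    unfolding Delta_ordered_def f_def pair_def
    by (simp only: sum.cartesian_product fst_conv snd_conv Union_insert Union_empty Un_empty_right)
      (simp only: case_prod_unfold)
  also have "\<dots> = (\<Sum>x\<in>Od. f (pair x))"
    unfolding Od_def using assms by (simp only: sum_of_bool_mult_eq finite_cartesian_product) (simp add: Collect_conj_eq Int_commute)
  also have "\<dots> = (\<Sum>P\<in>pair ` Od. \<Sum>x\<in>{x \<in> Od. pair x = P}. f (pair x))"
    using assms unfolding Od_def by (intro sum.image_gen) simp
  also have "\<dots> = (\<Sum>P\<in>pair ` Od. 2 * f P)" by (rule sum.cong[OF refl]) (rule fibre)
  also have "\<dots> = 2 * Delta_p p H" unfolding pairs Delta_p_def f_def by (simp add: sum_distrib_left)
  finally show ?thesis .
qed

lemma power_card_Un_ge: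
  fixes p :: real
  assumes "0 \<le> p" "p \<le> 1" "finite A" "finite B"
  shows "p ^ card A * p ^ card B \<le> p ^ card (A \<union> B)"
  using power_decreasing[OF card_Un_le[of A B] assms(1,2)] by (simp add: power_add)

text \<open>Discarding the edges of overlap weight above 4 costs at most a third of \<open>Delta_ordered\<close>:
  each such edge A has \<open>p ^ card A \<le> 1\<close> of its weight from itself, so at least 3 from
  other edges B, and \<open>p ^ card A * p ^ card B \<le> p ^ card (A \<union> B)\<close>.\<close>
lemma mu_p_prune_heavy:
  assumes "finite G" "0 \<le> p" "p \<le> 1" "\<And>A. A \<in> G \<Longrightarrow> A \<noteq> {} \<and> finite A"
  shows "mu_p p G - Delta_ordered p G / 3 \<le> mu_p p {A\<in>G. overlap_weight p G A \<le> 4}"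
proof -
  define light where "light = {A\<in>G. overlap_weight p G A \<le> 4}"
  define others where "others = (\<lambda>A. \<Sum>B\<in>G. of_bool (A \<noteq> B \<and> A \<inter> B \<noteq> {}) * p ^ card (A \<union> B))"
  have heavy: "p ^ card A \<le> others A / 3" if "A \<in> G - light" for A
  proof -
    have A: "A \<in> G" "4 < overlap_weight p G A" "p ^ card A \<le> 1"
      using that assms(2,3) unfolding light_def by (auto intro: power_le_one)
    have "overlap_weight p G A = (\<Sum>B\<in>G. of_bool (A \<inter> B \<noteq> {}) * p ^ card B)"
      unfolding overlap_weight_def using assms(1) by (simp add: Collect_conj_eq Int_commute)
    also have "\<dots> = p ^ card A + (\<Sum>B\<in>G - {A}. of_bool (A \<inter> B \<noteq> {}) * p ^ card B)"
      using A(1) assms(1,4) by (simp add: sum.remove del: sum_of_bool_mult_eq)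
    also have "(\<Sum>B\<in>G - {A}. of_bool (A \<inter> B \<noteq> {}) * p ^ card B)
        = (\<Sum>B\<in>G. of_bool (A \<noteq> B \<and> A \<inter> B \<noteq> {}) * p ^ card B)"
      using assms(1) A(1) by (intro sum.mono_neutral_cong_left) auto
    finally have "3 \<le> (\<Sum>B\<in>G. of_bool (A \<noteq> B \<and> A \<inter> B \<noteq> {}) * p ^ card B)"
      using A by linarith
    then have "3 * p ^ card A \<le> (\<Sum>B\<in>G. of_bool (A \<noteq> B \<and> A \<inter> B \<noteq> {}) * p ^ card B) * p ^ card A"
      using assms(2) by (intro mult_right_mono) simp_all
    also have "\<dots> \<le> others A"
      unfolding others_def sum_distrib_right
    proof (rule sum_mono)
      fix B assume "B \<in> G"
      then have "p ^ card A * p ^ card B \<le> p ^ card (A \<union> B)"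
        using assms A(1) by (intro power_card_Un_ge) auto
      then show "of_bool (A \<noteq> B \<and> A \<inter> B \<noteq> {}) * p ^ card B * p ^ card A
          \<le> of_bool (A \<noteq> B \<and> A \<inter> B \<noteq> {}) * p ^ card (A \<union> B)"
        by (simp add: mult.commute)
    qed
    finally show ?thesis by simp
  qed
  have "light \<subseteq> G" unfolding light_def by blast
  then have "mu_p p G = mu_p p light + (\<Sum>A\<in>G - light. p ^ card A)"
    unfolding mu_p_def using assms(1) by (simp add: sum.subset_diff[of light G])
  also have "(\<Sum>A\<in>G - light. p ^ card A) \<le> (\<Sum>A\<in>G - light. others A / 3)"
    using heavy by (rule sum_mono)
  also have "\<dots> \<le> (\<Sum>A\<in>G. others A / 3)"
    using assms(1,2) unfolding others_def by (intro sum_mono2 divide_nonneg_pos sum_nonneg) auto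
  also have "\<dots> = Delta_ordered p G / 3"
    unfolding Delta_ordered_def others_def by (simp add: sum_divide_distrib)
  finally show ?thesis unfolding light_def by simp
qed

text \<open>Keeping each edge independently with probability q scales \<open>mu_p\<close> by q and
  \<open>Delta_ordered\<close> by \<open>q\<^sup>2\<close> in expectation; some outcome does at least as well.\<close>
lemma exists_subfamily_by_sampling:
  assumes "finite H" "0 \<le> q" "q \<le> 1"
  obtains G where "G \<subseteq> H" "a * q * mu_p p H - b * q\<^sup>2 * Delta_ordered p H \<le> a * mu_p p G - b * Delta_ordered p G"
proof -
  let ?E = "subset_expectation q H"
  let ?w = "\<lambda>A B. of_bool (A \<noteq> B \<and> A \<inter> B \<noteq> {}) * p ^ card (A \<union> B)"
  have mu_sum: "mu_p p G = (\<Sum>A\<in>H. of_bool ({A} \<subseteq> G) * p ^ card A)" if "G \<subseteq> H" for G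
    unfolding mu_p_def using that assms(1) by (simp add: Int_absorb1)
  have Delta_sum: "Delta_ordered p G = (\<Sum>A\<in>H. \<Sum>B\<in>H. of_bool ({A, B} \<subseteq> G) * ?w A B)"
    if "G \<subseteq> H" for G
  proof -
    have "(\<Sum>A\<in>H. \<Sum>B\<in>H. of_bool ({A, B} \<subseteq> G) * ?w A B)
        = (\<Sum>A\<in>H. of_bool (A \<in> G) * (\<Sum>B\<in>H. of_bool (B \<in> G) * ?w A B))"
      unfolding sum_distrib_left by (intro sum.cong refl) simp
    also have "\<dots> = Delta_ordered p G"
      unfolding Delta_ordered_def using that assms(1) by (simp add: Int_absorb1)
    finally show ?thesis ..
  qed
  have single: "?E (\<lambda>G. of_bool ({A} \<subseteq> G)) = q" if "A \<in> H" for A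
    using subset_expectation_present[OF assms(1), of "{A}" q] that by simp
  have pair: "?E (\<lambda>G. of_bool ({A, B} \<subseteq> G)) * ?w A B = q\<^sup>2 * ?w A B" if "A \<in> H" "B \<in> H" for A B
    using subset_expectation_present[OF assms(1), of "{A, B}" q] that
    by (cases "A = B") (simp_all add: power2_eq_square)
  have "?E (\<lambda>G. a * mu_p p G - b * Delta_ordered p G)
      = ?E (\<lambda>G. a * (\<Sum>A\<in>H. of_bool ({A} \<subseteq> G) * p ^ card A)
               - b * (\<Sum>A\<in>H. \<Sum>B\<in>H. of_bool ({A, B} \<subseteq> G) * ?w A B))"
    by (intro subset_expectation_cong) (simp only: mu_sum Delta_sum)
  also have "\<dots> = a * (\<Sum>A\<in>H. ?E (\<lambda>G. of_bool ({A} \<subseteq> G)) * p ^ card A)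
        - b * (\<Sum>A\<in>H. \<Sum>B\<in>H. ?E (\<lambda>G. of_bool ({A, B} \<subseteq> G)) * ?w A B)"
    by (simp only: subset_expectation_diff subset_expectation_cmult subset_expectation_sum
        subset_expectation_mult_const)
  also have "(\<Sum>A\<in>H. ?E (\<lambda>G. of_bool ({A} \<subseteq> G)) * p ^ card A) = q * mu_p p H"
    unfolding mu_p_def sum_distrib_left by (intro sum.cong refl) (simp only: single)
  also have "(\<Sum>A\<in>H. \<Sum>B\<in>H. ?E (\<lambda>G. of_bool ({A, B} \<subseteq> G)) * ?w A B) = q\<^sup>2 * Delta_ordered p H"
    unfolding Delta_ordered_def sum_distrib_left by (intro sum.cong refl) (simp only: pair)
  finally have expectation: "?E (\<lambda>G. a * mu_p p G - b * Delta_ordered p G)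
      = a * q * mu_p p H - b * q\<^sup>2 * Delta_ordered p H"
    by (simp only: mult.assoc)
  obtain G where "G \<subseteq> H" "?E (\<lambda>G. a * mu_p p G - b * Delta_ordered p G) \<le> a * mu_p p G - b * Delta_ordered p G"
    using subset_expectation_le_max[OF assms] .
  with that show ?thesis unfolding expectation .
qed

lemma exp_minus_two_le: "exp (- 2 :: real) \<le> 4 / 25"
proof -
  have "(25 / 4 :: real) \<le> (1 + 1 / 8) ^ 16" by (simp add: power_divide)
  also have "\<dots> \<le> exp (1 / 8) ^ 16" using exp_ge_add_one_self[of "1 / 8 :: real"] by (intro power_mono) auto
  also have "\<dots> = exp 2" by (simp flip: exp_of_nat_mult)
  finally show ?thesis by (simp add: exp_minus field_simps)
qed

lemma mu_p_nonneg: "0 \<le> p \<Longrightarrow> 0 \<le> mu_p p H"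
  unfolding mu_p_def by (simp add: sum_nonneg)

lemma Lambda_p_nonneg:
  assumes "finite H" "0 \<le> p"
  shows "0 \<le> Lambda_p p H"
  using mu_p_nonneg[OF assms(2), of H] Delta_ordered_nonneg[OF assms(2), of H]
  unfolding Lambda_p_def Delta_ordered_eq_Delta_p[OF assms(1)] by auto

lemma exists_subfamily_Lambda_bound:
  assumes "finite H" "0 \<le> p"
  obtains G where "G \<subseteq> H" "53 / 500 * Lambda_p p H \<le> 21 / 25 * mu_p p G - 39 / 50 * Delta_ordered p G"
proof -
  define \<mu> where "\<mu> = mu_p p H"
  define \<Delta> where "\<Delta> = Delta_p p H"
  have D: "Delta_ordered p H = 2 * \<Delta>" unfolding \<Delta>_def by (rule Delta_ordered_eq_Delta_p[OF assms(1)])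
  have "0 \<le> \<mu>" "0 \<le> \<Delta>"
    using mu_p_nonneg Delta_ordered_nonneg[of p H] assms D unfolding \<mu>_def by auto
  show ?thesis
  proof (cases "4 * (39 / 50) * \<Delta> \<le> 21 / 25 * \<mu>")
    case True
    have "53 / 500 * Lambda_p p H \<le> 53 / 500 * \<mu>" unfolding Lambda_p_def \<mu>_def by simp
    also have "\<dots> \<le> 21 / 25 * mu_p p H - 39 / 50 * Delta_ordered p H"
      using True \<open>0 \<le> \<mu>\<close> D unfolding \<mu>_def by simp
    finally show ?thesis using that by blast
  next
    case False
    then have "0 < \<Delta>" using \<open>0 \<le> \<mu>\<close> \<open>0 \<le> \<Delta>\<close> by linarith
    define q where "q = 21 / 25 * \<mu> / (4 * (39 / 50) * \<Delta>)"
    have "0 \<le> q" "q \<le> 1" unfolding q_def using \<open>0 < \<Delta>\<close> \<open>0 \<le> \<mu>\<close> False by (auto simp: field_simps)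
    then obtain G where G: "G \<subseteq> H"
      "21 / 25 * q * mu_p p H - 39 / 50 * q\<^sup>2 * Delta_ordered p H \<le> 21 / 25 * mu_p p G - 39 / 50 * Delta_ordered p G"
      using exists_subfamily_by_sampling[OF assms(1)] by blast
    have "53 / 500 * Lambda_p p H \<le> 53 / 500 * (\<mu>\<^sup>2 / \<Delta>)"
      using \<open>0 < \<Delta>\<close> unfolding Lambda_p_def \<mu>_def \<Delta>_def by simp
    also have "\<dots> \<le> 21 / 25 * q * mu_p p H - 39 / 50 * q\<^sup>2 * Delta_ordered p H"
      unfolding D \<mu>_def[symmetric] q_def using \<open>0 < \<Delta>\<close> by (simp add: field_simps power2_eq_square)
    finally have "53 / 500 * Lambda_p p H \<le> 21 / 25 * mu_p p G - 39 / 50 * Delta_ordered p G"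
      using G(2) by linarith
    with that G(1) show ?thesis by blast
  qed
qed

lemma exists_sparse_subfamily:
  assumes "finite H" "0 \<le> p" "p \<le> 1" "\<And>A. A \<in> H \<Longrightarrow> A \<noteq> {} \<and> finite A"
  obtains G where "G \<subseteq> H" "\<And>A. A \<in> G \<Longrightarrow> overlap_weight p G A \<le> 4"
    "53 / 500 * Lambda_p p H \<le> 21 / 25 * mu_p p G - Delta_ordered p G / 2"
proof -
  obtain G1 where G1: "G1 \<subseteq> H" "53 / 500 * Lambda_p p H \<le> 21 / 25 * mu_p p G1 - 39 / 50 * Delta_ordered p G1"
    using exists_subfamily_Lambda_bound[OF assms(1,2)] .
  define G where "G = {A\<in>G1. overlap_weight p G1 A \<le> 4}"
  have "finite G1" using assms(1) G1(1) by (rule finite_subset[rotated])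
  have "G \<subseteq> G1" unfolding G_def by blast
  have "overlap_weight p G A \<le> 4" if "A \<in> G" for A
  proof -
    have "overlap_weight p G A \<le> overlap_weight p G1 A"
      unfolding overlap_weight_def using \<open>finite G1\<close> \<open>G \<subseteq> G1\<close> assms(2) by (intro sum_mono2) auto
    then show ?thesis using that unfolding G_def by simp
  qed
  moreover have "mu_p p G1 - Delta_ordered p G1 / 3 \<le> mu_p p G"
    unfolding G_def using mu_p_prune_heavy[OF \<open>finite G1\<close> assms(2,3)] assms(4) G1(1) by blast
  moreover have "Delta_ordered p G \<le> Delta_ordered p G1"
    using Delta_ordered_mono[OF \<open>G \<subseteq> G1\<close> \<open>finite G1\<close> assms(2)] .
  ultimately have "53 / 500 * Lambda_p p H \<le> 21 / 25 * mu_p p G - Delta_ordered p G / 2"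
    using G1(2) by linarith
  moreover have "G \<subseteq> H" using \<open>G \<subseteq> G1\<close> G1(1) by blast
  ultimately show ?thesis using that \<open>\<And>A. A \<in> G \<Longrightarrow> overlap_weight p G A \<le> 4\<close> by blast
qed

theorem mainTheorem4:
  fixes V :: "'a set" and H :: "'a set set" and p :: real
  assumes "finite V"
    and "\<And>A. A \<in> H \<Longrightarrow> A \<subseteq> V \<and> A \<noteq> {}"
    and "0 \<le> p" and "p \<le> 1"
  shows "measure_pmf.prob (random_subset V p)
           {W. real (matching_number (induced H W)) \<le> Lambda_p p H / 1000}
         \<le> exp (- Lambda_p p H / 10)"
proof -
  define \<Lambda> where "\<Lambda> = Lambda_p p H"
  have "finite H" using assms(1,2) by (intro finite_subset[of H "Pow V"]) auto
  then have "0 \<le> \<Lambda>" unfolding \<Lambda>_def using assms(3) by (rule Lambda_p_nonneg)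
  have "A \<noteq> {} \<and> finite A" if "A \<in> H" for A
    using assms(2)[OF that] by (auto intro: finite_subset[OF _ assms(1)])
  then obtain G where G: "G \<subseteq> H" "\<And>A. A \<in> G \<Longrightarrow> overlap_weight p G A \<le> 4"
    "53 / 500 * \<Lambda> \<le> 21 / 25 * mu_p p G - Delta_ordered p G / 2"
    using exists_sparse_subfamily[OF \<open>finite H\<close> assms(3,4)] unfolding \<Lambda>_def by blast
  have "measure_pmf.prob (random_subset V p) {W. real (matching_number (induced H W)) \<le> \<Lambda> / 1000}
      \<le> exp (- mu_p p G + Delta_ordered p G / 2)
          * (exp (- 6) powr (- (\<Lambda> / 1000)) * exp (exp (- 6) * (exp 4 * mu_p p G)))"
    unfolding prob_random_subset[OF assms(1,3,4)] mem_Collect_eq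
    using \<open>0 \<le> \<Lambda>\<close> by (intro small_matching_bound[OF assms(1,3,4) \<open>finite H\<close> assms(2) G(1,2)]) auto
  also have "\<dots> = exp (- mu_p p G + Delta_ordered p G / 2 + 6 * (\<Lambda> / 1000) + exp (- 2) * mu_p p G)"
    by (simp add: powr_def exp_add mult.assoc[symmetric] flip: exp_add)
  also have "\<dots> \<le> exp (- \<Lambda> / 10)"
    using mult_right_mono[OF exp_minus_two_le mu_p_nonneg[OF assms(3), of G]] G(3)
    by (subst exp_le_cancel_iff) linarith
  finally show ?thesis unfolding \<Lambda>_def .
qed

end
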